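(* Let $G$ be a group, let $K$ be an uncountable algebraically closed field, and let $A$ be an affine algebraic set over $K$. Then every algebraic cellular automaton $\tau\colon A^G\to A^G$ has the closed image property: its image $\tau(A^G)$ is a closed subset of $A^G$ with respect to the prodiscrete topology.
   Context: For a group $G$ and a set $A$, $A^G$ is the set of maps $x\colon G\to A$ (configurations), with the $G$-shift $(gx)(h)=x(g^{-1}h)$. The prodiscrete topology on $A^G$ is the product topology where each factor $A$ carries the discrete topology. For $x\in A^G$ and $\Omega\subset G$, $x|_\Omega$ denotes the restriction. A cellular automaton is a map $\tau\colon A^G\to A^G$ for which there exist a finite subset $M\subset G$ (a memory set) and a map $\mu\colon A^M\to A$ (the local defining map) with $\tau(x)(g)=\mu((g^{-1}x)|_M)$ for all $x\in A^G$, $g\in G$. An affine algebraic set over a field $K$ is the common zero set in $K^m$ of a set of polynomials in $K[t_1,\dots,t_m]$; a map between affine algebraic sets $V\subset K^m$, $W\subset K^n$ is regular if it is the restriction of a polynomial map $K^m\to K^n$. For finite $M$, $A^M$ is an affine algebraic set (a finite Cartesian power of $A$). A cellular automaton $\tau\colon A^G\to A^G$ with $A$ an affine algebraic set over $K$ is algebraic if for some (equivalently any) memory set $M$ the local defining map $\mu\colon A^M\to A$ is regular. *)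

theory Defs
  imports "HOL-Analysis.Analysis" "HOL-Computational_Algebra.Polynomial"
begin

inductive_set polyfun :: "'v set \<Rightarrow> (('v \<Rightarrow> 'k::comm_ring_1) \<Rightarrow> 'k) set"
  for V :: "'v set" where
  const: "(\<lambda>_. c) \<in> polyfun V"
| var: "i \<in> V \<Longrightarrow> (\<lambda>x. x i) \<in> polyfun V"
| add: "p \<in> polyfun V \<Longrightarrow> q \<in> polyfun V \<Longrightarrow> (\<lambda>x. p x + q x) \<in> polyfun V"
| mult: "p \<in> polyfun V \<Longrightarrow> q \<in> polyfun V \<Longrightarrow> (\<lambda>x. p x * q x) \<in> polyfun V"

text \<open>Affine algebraic set in K^n, n = CARD('n): common zero set of a set of polynomials.\<close>
definition affine_algebraic_set :: "('n::finite \<Rightarrow> 'k::field) set \<Rightarrow> bool" where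
  "affine_algebraic_set A \<longleftrightarrow>
     (\<exists>S. S \<subseteq> polyfun (UNIV :: 'n set) \<and> A = {x. \<forall>f\<in>S. f x = 0})"

definition configs :: "'a set \<Rightarrow> ('g \<Rightarrow> 'a) set" where
  "configs A = {x. \<forall>g. x g \<in> A}"

text \<open>Shift: (g x)(h) = x(g^{-1} h); the group G is written additively (group_add, not
  necessarily commutative).\<close>
definition shift :: "'g::group_add \<Rightarrow> ('g \<Rightarrow> 'a) \<Rightarrow> ('g \<Rightarrow> 'a)" where
  "shift g x = (\<lambda>h. x (- g + h))"

definition memory_local_map ::
    "'a set \<Rightarrow> (('g::group_add \<Rightarrow> 'a) \<Rightarrow> ('g \<Rightarrow> 'a)) \<Rightarrow> 'g set \<Rightarrow> (('g \<Rightarrow> 'a) \<Rightarrow> 'a) \<Rightarrow> bool" where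
  "memory_local_map A \<tau> M \<mu> \<longleftrightarrow> finite M \<and> (\<forall>y\<in>PiE M (\<lambda>_. A). \<mu> y \<in> A) \<and>
     (\<forall>x\<in>configs A. \<forall>g. \<tau> x g = \<mu> (restrict (shift (- g) x) M))"

definition cellular_automaton :: "'a set \<Rightarrow> (('g::group_add \<Rightarrow> 'a) \<Rightarrow> ('g \<Rightarrow> 'a)) \<Rightarrow> bool" where
  "cellular_automaton A \<tau> \<longleftrightarrow> (\<exists>M \<mu>. memory_local_map A \<tau> M \<mu>)"

text \<open>A map mu : A^M -> A (A \<subseteq> K^'n, so A^M \<subseteq> K^(M x 'n)) is regular if it is the
  restriction of a polynomial map K^(M x 'n) -> K^'n.\<close>
definition regular_local_map ::
    "('n \<Rightarrow> 'k::field) set \<Rightarrow> 'g set \<Rightarrow> (('g \<Rightarrow> 'n \<Rightarrow> 'k) \<Rightarrow> ('n \<Rightarrow> 'k)) \<Rightarrow> bool" where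
  "regular_local_map A M \<mu> \<longleftrightarrow>
     (\<exists>P :: 'n \<Rightarrow> (('g \<times> 'n) \<Rightarrow> 'k) \<Rightarrow> 'k. (\<forall>j. P j \<in> polyfun (M \<times> UNIV)) \<and>
        (\<forall>y\<in>PiE M (\<lambda>_. A). \<mu> y = (\<lambda>j. P j (\<lambda>(h, i). y h i))))"

definition algebraic_ca ::
    "('n \<Rightarrow> 'k::field) set \<Rightarrow> (('g::group_add \<Rightarrow> 'n \<Rightarrow> 'k) \<Rightarrow> ('g \<Rightarrow> 'n \<Rightarrow> 'k)) \<Rightarrow> bool" where
  "algebraic_ca A \<tau> \<longleftrightarrow> (\<exists>M \<mu>. memory_local_map A \<tau> M \<mu> \<and> regular_local_map A M \<mu>)"

end

theory Submission
  imports Defs "HOL-Library.Function_Algebras"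
begin

text \<open>
  Let \<open>y\<close> lie in the closure of \<open>\<tau>(A\<^sup>G)\<close>.  The local rule of \<open>\<tau>\<close> is given by
  polynomials in the cells of a finite memory set \<open>M\<close>, so the equations \<open>\<tau>(x) = y\<close> only couple
  cells in the same coset of the (countable) subgroup \<open>\<langle>M\<rangle>\<close>.  On one coset they form a system of
  polynomial equations in countably many unknowns, every finite subsystem of which is solvable
  because \<open>y\<close> is approximated by images.  The key algebraic fact is a compactness theorem: such a
  system is solvable.  Its proof is the countable weak Nullstellensatz: the finite consequences of
  the system form a proper ideal, contained in a maximal ideal \<open>m\<close>, and modulo \<open>m\<close> every
  polynomial is congruent to a constant -- otherwise the inverses of \<open>r - c\<close>, \<open>c \<in> K\<close>, would be
  uncountably many linearly independent elements of a space of countable dimension.  Solutions on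
  the cosets are finally glued to a preimage of \<open>y\<close>.
\<close>

section \<open>Ideals in subrings of a commutative ring\<close>

locale subring =
  fixes R :: "'a::comm_ring_1 set"
  assumes one_closed: "1 \<in> R"
    and uminus_closed: "a \<in> R \<Longrightarrow> - a \<in> R"
    and add_closed: "a \<in> R \<Longrightarrow> b \<in> R \<Longrightarrow> a + b \<in> R"
    and mult_closed: "a \<in> R \<Longrightarrow> b \<in> R \<Longrightarrow> a * b \<in> R"
begin

lemma zero_closed: "0 \<in> R"
  using add_closed[OF one_closed uminus_closed[OF one_closed]] by simp

lemma diff_closed: "a \<in> R \<Longrightarrow> b \<in> R \<Longrightarrow> a - b \<in> R"
  using add_closed[of a "- b"] uminus_closed[of b] by simp

lemma prod_closed: "(\<And>i. i \<in> I \<Longrightarrow> f i \<in> R) \<Longrightarrow> (\<Prod>i\<in>I. f i) \<in> R"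
  by (induction I rule: infinite_finite_induct) (auto intro: one_closed mult_closed)

definition ideal :: "'a set \<Rightarrow> bool" where
  "ideal J \<longleftrightarrow> J \<subseteq> R \<and> 0 \<in> J \<and> (\<forall>a\<in>J. \<forall>b\<in>J. a + b \<in> J) \<and> (\<forall>a\<in>J. \<forall>r\<in>R. r * a \<in> J)"

definition maximal_ideal :: "'a set \<Rightarrow> bool" where
  "maximal_ideal m \<longleftrightarrow> ideal m \<and> 1 \<notin> m \<and> (\<forall>J. ideal J \<and> m \<subseteq> J \<and> 1 \<notin> J \<longrightarrow> J = m)"

context
  fixes J assumes J: "ideal J"
begin

lemma ideal_subset: "a \<in> J \<Longrightarrow> a \<in> R"
  and ideal_zero: "0 \<in> J"
  and ideal_add: "a \<in> J \<Longrightarrow> b \<in> J \<Longrightarrow> a + b \<in> J"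
  and ideal_mult_left: "a \<in> J \<Longrightarrow> r \<in> R \<Longrightarrow> r * a \<in> J"
  and ideal_mult_right: "a \<in> J \<Longrightarrow> r \<in> R \<Longrightarrow> a * r \<in> J"
  using J unfolding ideal_def by (auto simp: mult.commute)

lemma ideal_uminus: "a \<in> J \<Longrightarrow> - a \<in> J"
  using ideal_mult_left[of a "- 1"] uminus_closed[OF one_closed] by simp

lemma ideal_diff: "a \<in> J \<Longrightarrow> b \<in> J \<Longrightarrow> a - b \<in> J"
  using ideal_add[of a "- b"] ideal_uminus[of b] by simp

lemma ideal_sum: "(\<And>i. i \<in> I \<Longrightarrow> f i \<in> J) \<Longrightarrow> (\<Sum>i\<in>I. f i) \<in> J"
  by (induction I rule: infinite_finite_induct) (auto intro: ideal_zero ideal_add)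

end

lemma maximal_ideal_exists:
  assumes I: "ideal I" "1 \<notin> I"
  shows "\<exists>m. maximal_ideal m \<and> I \<subseteq> m"
proof -
  define \<A> where "\<A> = {J. ideal J \<and> I \<subseteq> J \<and> 1 \<notin> J}"
  have "\<exists>M\<in>\<A>. \<forall>X\<in>\<A>. M \<subseteq> X \<longrightarrow> X = M"
  proof (rule subset_Zorn_nonempty)
    show "\<A> \<noteq> {}" using I unfolding \<A>_def by auto
  next
    fix C assume C: "C \<noteq> {}" "subset.chain \<A> C"
    then have CA: "\<And>X. X \<in> C \<Longrightarrow> ideal X \<and> I \<subseteq> X \<and> 1 \<notin> X"
      and chain: "\<And>X Y. X \<in> C \<Longrightarrow> Y \<in> C \<Longrightarrow> X \<subseteq> Y \<or> Y \<subseteq> X"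
      by (auto simp: subset.chain_def \<A>_def)
    have add: "a + b \<in> \<Union>C" if "a \<in> \<Union>C" "b \<in> \<Union>C" for a b
    proof -
      from that obtain X Y where XY: "X \<in> C" "Y \<in> C" "a \<in> X" "b \<in> Y" by auto
      with chain[OF XY(1,2)] ideal_add[of X a b] ideal_add[of Y a b] CA show ?thesis by blast
    qed
    have mult: "r * a \<in> \<Union>C" if "a \<in> \<Union>C" "r \<in> R" for a r
      using that CA ideal_mult_left by blast
    have "\<Union>C \<subseteq> R" using CA ideal_subset by blast
    moreover have "0 \<in> \<Union>C" using C(1) CA ideal_zero by blast
    ultimately
    have "ideal (\<Union>C)" using add mult unfolding ideal_def by (intro conjI ballI) auto
    then show "\<Union>C \<in> \<A>" using C(1) CA unfolding \<A>_def by blast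
  qed
  then obtain M where "M \<in> \<A>" "\<And>X. X \<in> \<A> \<Longrightarrow> M \<subseteq> X \<Longrightarrow> X = M" by blast
  then show ?thesis unfolding \<A>_def maximal_ideal_def by (intro exI[of _ M]) blast
qed

context
  fixes m assumes m: "maximal_ideal m"
begin

lemma maximal_ideal_ideal: "ideal m"
  and maximal_ideal_proper: "1 \<notin> m"
  using m by (simp_all add: maximal_ideal_def)

text \<open>Elements outside a maximal ideal are invertible modulo it: the ideal \<open>m + R a\<close> must
  contain \<open>1\<close>.\<close>

lemma maximal_ideal_inverse:
  assumes a: "a \<in> R" "a \<notin> m"
  shows "\<exists>s\<in>R. s * a - 1 \<in> m"
proof -
  note im = maximal_ideal_ideal
  define J where "J = {u + t * a | u t. u \<in> m \<and> t \<in> R}"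
  have "ideal J"
    unfolding ideal_def
  proof (intro conjI ballI)
    show "J \<subseteq> R"
      unfolding J_def using a by (auto intro: add_closed mult_closed ideal_subset[OF im])
    show "0 \<in> J"
      unfolding J_def using ideal_zero[OF im] zero_closed by force
  next
    fix x y assume "x \<in> J" "y \<in> J"
    then obtain u t u' t' where "x = u + t * a" "y = u' + t' * a" "u \<in> m" "t \<in> R" "u' \<in> m" "t' \<in> R"
      unfolding J_def by auto
    then show "x + y \<in> J" unfolding J_def
      by (intro CollectI exI[of _ "u + u'"] exI[of _ "t + t'"])
         (auto simp: algebra_simps intro: ideal_add[OF im] add_closed)
  next
    fix x r assume "x \<in> J" "r \<in> R"
    then obtain u t where "x = u + t * a" "u \<in> m" "t \<in> R"
      unfolding J_def by auto
    with \<open>r \<in> R\<close> show "r * x \<in> J" unfolding J_def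
      by (intro CollectI exI[of _ "r * u"] exI[of _ "r * t"])
         (auto simp: algebra_simps intro: ideal_mult_left[OF im] mult_closed)
  qed
  moreover have "m \<subseteq> J"
    unfolding J_def using zero_closed by force
  moreover have "a \<in> J"
    unfolding J_def using ideal_zero[OF im] one_closed by force
  ultimately have "1 \<in> J" using m a unfolding maximal_ideal_def by blast
  then obtain u t where "1 = u + t * a" "u \<in> m" "t \<in> R" unfolding J_def by auto
  moreover from this have "t * a - 1 = - u" by (simp add: algebra_simps)
  ultimately show ?thesis using ideal_uminus[OF im] by metis
qed

lemma maximal_ideal_prime:
  assumes ab: "a \<in> R" "b \<in> R" "a * b \<in> m"
  shows "a \<in> m \<or> b \<in> m"
proof (cases "a \<in> m")
  case False
  then obtain s where s: "s \<in> R" "s * a - 1 \<in> m" using maximal_ideal_inverse ab(1) by blast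
  note im = maximal_ideal_ideal
  have "b = s * (a * b) - (s * a - 1) * b" by (simp add: algebra_simps)
  also have "\<dots> \<in> m"
    using ideal_mult_left[OF im ab(3) s(1)] ideal_mult_right[OF im s(2) ab(2)] by (rule ideal_diff[OF im])
  finally show ?thesis by simp
qed simp

end

end

section \<open>Linear algebra in spaces of functions\<close>

lemma uncountable_pigeonhole:
  assumes "uncountable I" "countable L" "\<And>c. c \<in> I \<Longrightarrow> F c \<in> L"
  shows "\<exists>l\<in>L. infinite {c\<in>I. F c = l}"
proof (rule ccontr)
  assume "\<not> ?thesis"
  then have "countable (\<Union>l\<in>L. {c\<in>I. F c = l})"
    using assms(2) by (intro countable_UN) (auto intro: countable_finite)
  moreover have "(\<Union>l\<in>L. {c\<in>I. F c = l}) = I" using assms(3) by auto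
  ultimately show False using assms(1) by simp
qed

lemma (in vector_space) uncountable_family_dependent:
  assumes I: "uncountable I" and f: "inj_on f I" and B: "countable B" "f ` I \<subseteq> span B"
  shows "\<exists>C a. finite C \<and> C \<subseteq> I \<and> (\<exists>c\<in>C. a c \<noteq> 0) \<and> (\<Sum>c\<in>C. scale (a c) (f c)) = 0"
proof -
  have "\<exists>F. finite F \<and> F \<subseteq> B \<and> f c \<in> span F" if "c \<in> I" for c
  proof -
    from that B(2) have "f c \<in> span B" by blast
    then obtain t u where "finite t" "t \<subseteq> B" "f c = (\<Sum>a\<in>t. scale (u a) a)"
      unfolding span_explicit by blast
    then show ?thesis by (intro exI[of _ t]) (auto intro: span_sum span_scale span_base)
  qed
  then obtain F where F: "\<And>c. c \<in> I \<Longrightarrow> finite (F c) \<and> F c \<subseteq> B \<and> f c \<in> span (F c)"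
    by metis
  have "\<exists>F0\<in>{F. finite F \<and> F \<subseteq> B}. infinite {c\<in>I. F c = F0}"
    using F by (intro uncountable_pigeonhole[OF I countable_Collect_finite_subset[OF B(1)]]) blast
  then obtain F0 where F0: "finite F0" "infinite {c\<in>I. F c = F0}" by blast
  from infinite_arbitrarily_large[OF F0(2), of "Suc (card F0)"]
  obtain C where C: "finite C" "card C = Suc (card F0)" "C \<subseteq> {c\<in>I. F c = F0}"
    by (elim exE conjE)
  have inj_C: "inj_on f C" using inj_on_subset[OF f] C(3) by blast
  have "dependent (f ` C)"
  proof (rule ccontr)
    assume "independent (f ` C)"
    moreover have "f ` C \<subseteq> span F0" using C(3) F by auto
    ultimately have "card (f ` C) \<le> card F0" using independent_span_bound[OF F0(1)] by blast
    with C(2) card_image[OF inj_C] show False by simp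
  qed
  then obtain u where u: "\<exists>v\<in>f ` C. u v \<noteq> 0" "(\<Sum>v\<in>f ` C. scale (u v) v) = 0"
    using dependent_finite[of "f ` C"] C(1) by blast
  then have "(\<exists>c\<in>C. u (f c) \<noteq> 0) \<and> (\<Sum>c\<in>C. scale (u (f c)) (f c)) = 0"
    by (simp add: sum.reindex[OF inj_C])
  moreover have "C \<subseteq> I" using C(3) by blast
  ultimately show ?thesis using C(1) by (intro exI[of _ C] exI[of _ "\<lambda>c. u (f c)"]) simp
qed

definition fscale :: "'k::field \<Rightarrow> ('w \<Rightarrow> 'k) \<Rightarrow> ('w \<Rightarrow> 'k)" where
  "fscale c f = (\<lambda>x. c * f x)"

interpretation fvs: vector_space fscale
  by unfold_locales (auto simp: fscale_def fun_eq_iff algebra_simps)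

lemma fvs_span_mult_closed:
  fixes p q :: "'w \<Rightarrow> 'k::field"
  assumes B: "\<And>a b. a \<in> B \<Longrightarrow> b \<in> B \<Longrightarrow> a * b \<in> B"
    and p: "p \<in> fvs.span B" and q: "q \<in> fvs.span B"
  shows "p * q \<in> fvs.span B"
proof -
  have "a * q \<in> fvs.span B" if a: "a \<in> B" for a
    using q
  proof (induction q rule: fvs.span_induct_alt)
    case (step c b q)
    have "a * (fscale c b + q) = fscale c (a * b) + a * q"
      by (simp add: fscale_def fun_eq_iff algebra_simps)
    with step B[OF a] show ?case by (metis fvs.span_add fvs.span_scale fvs.span_base)
  qed (metis mult_zero_right fvs.span_zero)
  with p show ?thesis
  proof (induction p rule: fvs.span_induct_alt)
    case (step c a p)
    have "(fscale c a + p) * q = fscale c (a * q) + p * q"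
      by (simp add: fscale_def fun_eq_iff algebra_simps)
    with step show ?case by (metis fvs.span_add fvs.span_scale)
  qed (metis mult_zero_left fvs.span_zero)
qed

section \<open>Algebras of functions and their maximal ideals\<close>

lemma sum_fun_apply: "(\<Sum>i\<in>I. f i) x = (\<Sum>i\<in>I. f i x)"
  by (induction I rule: infinite_finite_induct) auto

lemma prod_fun_apply: "(\<Prod>i\<in>I. f i) x = (\<Prod>i\<in>I. f i x)"
  by (induction I rule: infinite_finite_induct) auto

locale function_algebra = subring R for R :: "('w \<Rightarrow> 'k::field) set" +
  assumes const_closed: "(\<lambda>_. c) \<in> R"
begin

lemma poly_closed: "r \<in> R \<Longrightarrow> (\<lambda>x. poly q (r x)) \<in> R"
proof (induction q)
  case (pCons a q)
  have "(\<lambda>x. poly (pCons a q) (r x)) = (\<lambda>_. a) + r * (\<lambda>x. poly q (r x))"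
    by (simp add: fun_eq_iff)
  with pCons show ?case by (simp add: add_closed mult_closed const_closed)
qed (simp add: const_closed)

context
  fixes m assumes m: "maximal_ideal m"
begin

lemma maximal_ideal_const: "c \<noteq> 0 \<Longrightarrow> (\<lambda>_. c) \<notin> m"
proof
  assume "c \<noteq> 0" "(\<lambda>_. c) \<in> m"
  then have "(\<lambda>_. inverse c) * (\<lambda>_. c) \<in> m"
    by (intro ideal_mult_left[OF maximal_ideal_ideal[OF m]] const_closed)
  also have "(\<lambda>_. inverse c) * (\<lambda>_. c) = 1" using \<open>c \<noteq> 0\<close> by (simp add: fun_eq_iff)
  finally show False using maximal_ideal_proper[OF m] by blast
qed

lemma maximal_ideal_const_factor:
  assumes "c \<noteq> 0" "a \<in> R" "(\<lambda>_. c) * a \<in> m"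
  shows "a \<in> m"
  using maximal_ideal_prime[OF m const_closed assms(2,3)] maximal_ideal_const[OF assms(1)] by blast

lemma maximal_ideal_inverses_inj:
  assumes r: "r \<in> R" and s: "\<And>c. s c \<in> R" "\<And>c. s c * (r - (\<lambda>_. c)) - 1 \<in> m"
  shows "inj s"
proof (rule injI, rule ccontr)
  fix c d assume eq: "s c = s d" and "c \<noteq> d"
  note im = maximal_ideal_ideal[OF m]
  have "(\<lambda>_. d - c) * s c = (s c * (r - (\<lambda>_. c)) - 1) - (s c * (r - (\<lambda>_. d)) - 1)"
    by (simp add: fun_eq_iff algebra_simps)
  also have "\<dots> \<in> m" using ideal_diff[OF im s(2)[of c] s(2)[of d]] unfolding eq .
  finally have "s c \<in> m"
    using maximal_ideal_const_factor[of "d - c" "s c"] \<open>c \<noteq> d\<close> s(1) by simp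
  then have "s c * (r - (\<lambda>_. c)) \<in> m"
    using r by (intro ideal_mult_right[OF im] diff_closed const_closed)
  then have "s c * (r - (\<lambda>_. c)) - (s c * (r - (\<lambda>_. c)) - 1) \<in> m"
    using s(2) by (rule ideal_diff[OF im])
  then show False using maximal_ideal_proper[OF m] by simp
qed

text \<open>A linear relation \<open>\<Sum> a\<^sub>c s\<^sub>c = 0\<close> between these inverses yields, after multiplying
  by \<open>\<Prod> (r - d)\<close>, a polynomial relation for \<open>r\<close> modulo \<open>m\<close> (partial fractions).\<close>

lemma maximal_ideal_partial_fractions:
  assumes r: "r \<in> R" and C: "finite C"
    and s: "\<And>c. s c \<in> R" "\<And>c. s c * (r - (\<lambda>_. c)) - 1 \<in> m"
    and rel: "(\<Sum>c\<in>C. (\<lambda>_. a c) * s c) = 0"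
  shows "(\<lambda>x. poly (\<Sum>c\<in>C. smult (a c) (\<Prod>d\<in>C - {c}. [:- d, 1:])) (r x)) \<in> m"
proof -
  note im = maximal_ideal_ideal[OF m]
  define Q where "Q c = (\<Prod>d\<in>C - {c}. r - (\<lambda>_. d))" for c
  define P where "P = (\<Prod>d\<in>C. r - (\<lambda>_. d))"
  have QR: "Q c \<in> R" for c
    unfolding Q_def using r by (intro prod_closed diff_closed const_closed)
  have "(\<lambda>_. a c) * Q c = - ((\<lambda>_. a c) * Q c) * (s c * (r - (\<lambda>_. c)) - 1) + (\<lambda>_. a c) * s c * P"
    if "c \<in> C" for c
  proof -
    have P: "P = (r - (\<lambda>_. c)) * Q c" unfolding P_def Q_def using C that by (simp add: prod.remove)
    show ?thesis unfolding P by (simp add: algebra_simps)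
  qed
  then have "(\<Sum>c\<in>C. (\<lambda>_. a c) * Q c)
      = (\<Sum>c\<in>C. - ((\<lambda>_. a c) * Q c) * (s c * (r - (\<lambda>_. c)) - 1) + (\<lambda>_. a c) * s c * P)"
    by (rule sum.cong[OF refl])
  also have "\<dots> = (\<Sum>c\<in>C. - ((\<lambda>_. a c) * Q c) * (s c * (r - (\<lambda>_. c)) - 1))
      + (\<Sum>c\<in>C. (\<lambda>_. a c) * s c) * P"
    by (simp only: sum.distrib sum_distrib_right)
  also have "\<dots> = (\<Sum>c\<in>C. - ((\<lambda>_. a c) * Q c) * (s c * (r - (\<lambda>_. c)) - 1))"
    using rel by simp
  also have "\<dots> \<in> m"
    by (intro ideal_sum[OF im] ideal_mult_left[OF im] s(2) uminus_closed mult_closed const_closed QR)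
  also have "(\<Sum>c\<in>C. (\<lambda>_. a c) * Q c) = (\<lambda>x. poly (\<Sum>c\<in>C. smult (a c) (\<Prod>d\<in>C - {c}. [:- d, 1:])) (r x))"
    by (simp add: Q_def fun_eq_iff poly_sum poly_prod sum_fun_apply prod_fun_apply)
  finally show ?thesis .
qed

end

end

text \<open>The polynomial of the partial fraction argument is nonzero: at \<open>c\<^sub>0\<close> only the
  \<open>c\<^sub>0\<close>-th summand survives.\<close>

lemma lagrange_poly_nonzero:
  fixes a :: "'k::field \<Rightarrow> 'k"
  assumes C: "finite C" "c0 \<in> C" and a: "a c0 \<noteq> 0"
  shows "(\<Sum>c\<in>C. smult (a c) (\<Prod>d\<in>C - {c}. [:- d, 1:])) \<noteq> 0"
proof -
  have "poly (\<Sum>c\<in>C. smult (a c) (\<Prod>d\<in>C - {c}. [:- d, 1:])) c0 = (\<Sum>c\<in>C. a c * (\<Prod>d\<in>C - {c}. c0 - d))"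
    by (simp add: poly_sum poly_prod)
  also have "\<dots> = a c0 * (\<Prod>d\<in>C - {c0}. c0 - d)"
  proof -
    have "(\<Sum>c\<in>C - {c0}. a c * (\<Prod>d\<in>C - {c}. c0 - d)) = 0"
      using C by (intro sum.neutral) (auto intro!: prod_zero)
    then show ?thesis by (simp add: sum.remove[OF C])
  qed
  finally show ?thesis using a C(1) by auto
qed

context
  fixes R :: "('w \<Rightarrow> 'k::alg_closed_field) set"
  assumes R: "function_algebra R"
begin

interpretation function_algebra R by (rule R)

text \<open>Over an algebraically closed field, a polynomial relation \<open>p(r) \<in> m\<close> forces \<open>r\<close>
  to be congruent to a root of \<open>p\<close>: factor \<open>p\<close> into linear factors and use primality.\<close>

lemma maximal_ideal_poly_root:
  assumes m: "maximal_ideal m" and r: "r \<in> R"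
    and p: "p \<noteq> 0" "(\<lambda>x. poly p (r x)) \<in> m"
  shows "\<exists>e. r - (\<lambda>_. e) \<in> m"
  using p
proof (induction "degree p" arbitrary: p rule: less_induct)
  case (less p)
  show ?case
  proof (cases "degree p = 0")
    case True
    then obtain c where "p = [:c:]" by (metis degree_eq_zeroE)
    with less.prems maximal_ideal_const[OF m] show ?thesis by auto
  next
    case False
    then obtain e where "poly p e = 0" using alg_closed_imp_poly_has_root by blast
    then obtain q where q: "p = [:- e, 1:] * q" by (metis dvdE poly_eq_0_iff_dvd)
    with less.prems(1) have "q \<noteq> 0" by auto
    then have "degree p = 1 + degree q" unfolding q by (subst degree_mult_eq) auto
    then have "degree q < degree p" by simp
    have "(\<lambda>x. poly p (r x)) = (r - (\<lambda>_. e)) * (\<lambda>x. poly q (r x))"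
      unfolding q by (simp add: fun_eq_iff algebra_simps)
    with less.prems(2) have "(r - (\<lambda>_. e)) * (\<lambda>x. poly q (r x)) \<in> m" by simp
    then have "r - (\<lambda>_. e) \<in> m \<or> (\<lambda>x. poly q (r x)) \<in> m"
      using r by (intro maximal_ideal_prime[OF m] diff_closed const_closed poly_closed)
    with less.hyps[OF \<open>degree q < degree p\<close> \<open>q \<noteq> 0\<close>] show ?thesis by blast
  qed
qed

text \<open>Otherwise the inverses of \<open>r - c\<close>, \<open>c \<in> 'k\<close>, would be uncountably many distinct elements
  of a space of countable dimension, and a linear relation between them would make \<open>r\<close> a root
  of a nonzero polynomial modulo \<open>m\<close>.\<close>

lemma maximal_ideal_residue_constant:
  assumes unc: "uncountable (UNIV :: 'k set)" and B: "countable B" "R \<subseteq> fvs.span B"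
    and m: "maximal_ideal m" and r: "r \<in> R"
  shows "\<exists>e. r - (\<lambda>_. e) \<in> m"
proof (rule ccontr)
  assume not_const: "\<nexists>e. r - (\<lambda>_. e) \<in> m"
  have "\<exists>s\<in>R. s * (r - (\<lambda>_. c)) - 1 \<in> m" for c
    using maximal_ideal_inverse[OF m] r not_const by (blast intro: diff_closed const_closed)
  then obtain s where s: "\<And>c. s c \<in> R" "\<And>c. s c * (r - (\<lambda>_. c)) - 1 \<in> m"
    by metis
  have "inj_on s UNIV" by (rule maximal_ideal_inverses_inj[OF m r s])
  moreover have "s ` UNIV \<subseteq> fvs.span B" using s(1) B(2) by blast
  ultimately have "\<exists>C a. finite C \<and> C \<subseteq> UNIV \<and> (\<exists>c\<in>C. a c \<noteq> 0) \<and> (\<Sum>c\<in>C. fscale (a c) (s c)) = 0"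
    by (rule fvs.uncountable_family_dependent[OF unc _ B(1)])
  then obtain C a where C: "finite C" "\<exists>c\<in>C. a c \<noteq> 0" "(\<Sum>c\<in>C. fscale (a c) (s c)) = 0"
    by blast
  then have "(\<Sum>c\<in>C. (\<lambda>_. a c) * s c) = 0"
    by (simp add: fscale_def times_fun_def)
  then have "(\<lambda>x. poly (\<Sum>c\<in>C. smult (a c) (\<Prod>d\<in>C - {c}. [:- d, 1:])) (r x)) \<in> m"
    by (rule maximal_ideal_partial_fractions[OF m r C(1) s])
  moreover have "(\<Sum>c\<in>C. smult (a c) (\<Prod>d\<in>C - {c}. [:- d, 1:])) \<noteq> 0"
    using C(1,2) lagrange_poly_nonzero by blast
  ultimately show False
    using maximal_ideal_poly_root[OF m r] not_const by blast
qed

end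

section \<open>Polynomial systems in countably many variables\<close>

lemma polyfun_function_algebra: "function_algebra (polyfun V)"
  by unfold_locales (auto simp: plus_fun_def times_fun_def one_fun_def fun_Compl_def
      intro: polyfun.intros polyfun.mult[OF polyfun.const[of "- 1"], simplified])

interpretation polyfun: function_algebra "polyfun V" for V
  by (rule polyfun_function_algebra)

lemma polyfun_cong: "f \<in> polyfun V \<Longrightarrow> (\<And>i. i \<in> V \<Longrightarrow> a i = b i) \<Longrightarrow> f a = f b"
  by (induction f rule: polyfun.induct) auto

lemma polyfun_subst:
  "f \<in> polyfun V \<Longrightarrow> (\<And>i. i \<in> V \<Longrightarrow> q i \<in> polyfun W) \<Longrightarrow> (\<lambda>\<xi>. f (\<lambda>i. q i \<xi>)) \<in> polyfun W"
  by (induction f rule: polyfun.induct) (auto intro: polyfun.intros)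

text \<open>Polynomial functions are spanned by the monomials, so in countably many variables they
  form a space of countable dimension.\<close>

definition monomial_fun :: "'v list \<Rightarrow> ('v \<Rightarrow> 'k::comm_ring_1) \<Rightarrow> 'k" where
  "monomial_fun vs = (\<lambda>x. prod_list (map x vs))"

lemma polyfun_span_monomials:
  "(polyfun X :: (('v \<Rightarrow> 'k::field) \<Rightarrow> 'k) set) \<subseteq> fvs.span (monomial_fun ` lists X)"
proof
  fix p :: "('v \<Rightarrow> 'k) \<Rightarrow> 'k" assume "p \<in> polyfun X"
  then show "p \<in> fvs.span (monomial_fun ` lists X)"
  proof (induction p rule: polyfun.induct)
    case (const c)
    have "(\<lambda>_. c) = fscale c (monomial_fun [])" by (simp add: fscale_def monomial_fun_def)
    then show ?case by (metis fvs.span_base fvs.span_scale image_eqI lists.Nil)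
  next
    case (var i)
    have "(\<lambda>x. x i) = monomial_fun [i]" by (simp add: monomial_fun_def)
    with var show ?case by (metis fvs.span_base image_eqI lists.Cons lists.Nil)
  next
    case (add p q)
    from fvs.span_add[OF add.IH] show ?case by (simp only: plus_fun_def)
  next
    case (mult p q)
    have closed: "a * b \<in> monomial_fun ` lists X" if "a \<in> monomial_fun ` lists X" "b \<in> monomial_fun ` lists X" for a b
    proof -
      from that obtain vs ws where "a = monomial_fun vs" "b = monomial_fun ws" "vs \<in> lists X" "ws \<in> lists X"
        by blast
      then show ?thesis by (intro image_eqI[of _ _ "vs @ ws"]) (auto simp: monomial_fun_def fun_eq_iff)
    qed
    have "p * q \<in> fvs.span (monomial_fun ` lists X)"
      by (rule fvs_span_mult_closed[OF closed mult.IH])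
    then show ?case by (simp add: times_fun_def)
  qed
qed

lemma polyfun_maximal_ideal_zero:
  fixes m :: "(('v \<Rightarrow> 'k::alg_closed_field) \<Rightarrow> 'k) set"
  assumes unc: "uncountable (UNIV :: 'k set)" and X: "countable X"
    and m: "polyfun.maximal_ideal X m"
  shows "\<exists>\<xi>. \<forall>p\<in>m. p \<xi> = 0"
proof -
  note im = polyfun.maximal_ideal_ideal[OF m]
  have "\<exists>e. (\<lambda>x. x v) - (\<lambda>_. e) \<in> m" if "v \<in> X" for v
  proof (rule maximal_ideal_residue_constant[OF polyfun_function_algebra unc _ polyfun_span_monomials m])
    show "countable (monomial_fun ` lists X)" using X by simp
    show "(\<lambda>x. x v) \<in> polyfun X" using that by (rule polyfun.var)
  qed
  then obtain \<xi> where \<xi>: "\<And>v. v \<in> X \<Longrightarrow> (\<lambda>x. x v) - (\<lambda>_. \<xi> v) \<in> m" by metis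
  have residue: "p - (\<lambda>_. p \<xi>) \<in> m" if "p \<in> polyfun X" for p
    using that
  proof (induction p rule: polyfun.induct)
    case (const c)
    then show ?case using polyfun.ideal_zero[OF im] by (simp add: zero_fun_def)
  next
    case (var i)
    then show ?case using \<xi> by blast
  next
    case (add p q)
    have eq: "(\<lambda>x. p x + q x) - (\<lambda>_. p \<xi> + q \<xi>) = (p - (\<lambda>_. p \<xi>)) + (q - (\<lambda>_. q \<xi>))"
      by (simp add: fun_eq_iff)
    show ?case unfolding eq by (rule polyfun.ideal_add[OF im add.IH])
  next
    case (mult p q)
    have eq: "(\<lambda>x. p x * q x) - (\<lambda>_. p \<xi> * q \<xi>)
        = q * (p - (\<lambda>_. p \<xi>)) + (\<lambda>_. p \<xi>) * (q - (\<lambda>_. q \<xi>))"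
      by (simp add: fun_eq_iff algebra_simps)
    show ?case unfolding eq
      using mult by (intro polyfun.ideal_add[OF im] polyfun.ideal_mult_left[OF im] polyfun.const)
  qed
  have "\<forall>p\<in>m. p \<xi> = 0"
  proof (rule ballI, rule ccontr)
    fix p assume "p \<in> m" "p \<xi> \<noteq> 0"
    have "p \<in> polyfun X" using \<open>p \<in> m\<close> by (rule polyfun.ideal_subset[OF im])
    then have "p - (p - (\<lambda>_. p \<xi>)) \<in> m"
      by (rule polyfun.ideal_diff[OF im \<open>p \<in> m\<close> residue])
    with polyfun.maximal_ideal_const[OF m \<open>p \<xi> \<noteq> 0\<close>] show False by simp
  qed
  then show ?thesis by blast
qed

text \<open>The consequences of finite subsystems form a proper ideal; a maximal
  ideal containing it vanishes at a common solution.\<close>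

theorem polynomial_system_compactness:
  fixes E :: "(('v \<Rightarrow> 'k::alg_closed_field) \<Rightarrow> 'k) set"
  assumes unc: "uncountable (UNIV :: 'k set)" and X: "countable X" and E: "E \<subseteq> polyfun X"
    and finite_solvable: "\<And>E0. finite E0 \<Longrightarrow> E0 \<subseteq> E \<Longrightarrow> \<exists>\<xi>. \<forall>f\<in>E0. f \<xi> = 0"
  shows "\<exists>\<xi>. \<forall>f\<in>E. f \<xi> = 0"
proof -
  define I where "I = {p \<in> polyfun X. \<exists>E0. finite E0 \<and> E0 \<subseteq> E \<and> (\<forall>\<xi>. (\<forall>f\<in>E0. f \<xi> = 0) \<longrightarrow> p \<xi> = 0)}"
  have "polyfun.ideal X I"
    unfolding polyfun.ideal_def
  proof (intro conjI ballI)
    show "I \<subseteq> polyfun X" "0 \<in> I" unfolding I_def by (auto simp: polyfun.zero_closed)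
  next
    fix p q assume "p \<in> I" "q \<in> I"
    then obtain E1 E2 where "p \<in> polyfun X" "q \<in> polyfun X" "finite E1" "E1 \<subseteq> E" "finite E2" "E2 \<subseteq> E"
      "\<forall>\<xi>. (\<forall>f\<in>E1. f \<xi> = 0) \<longrightarrow> p \<xi> = 0" "\<forall>\<xi>. (\<forall>f\<in>E2. f \<xi> = 0) \<longrightarrow> q \<xi> = 0"
      unfolding I_def by blast
    then show "p + q \<in> I" unfolding I_def
      by (intro CollectI conjI polyfun.add_closed exI[of _ "E1 \<union> E2"]) auto
  next
    fix p t :: "('v \<Rightarrow> 'k) \<Rightarrow> 'k" assume "p \<in> I" "t \<in> polyfun X"
    then obtain E1 where "p \<in> polyfun X" "finite E1" "E1 \<subseteq> E" "\<forall>\<xi>. (\<forall>f\<in>E1. f \<xi> = 0) \<longrightarrow> p \<xi> = 0"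
      unfolding I_def by blast
    with \<open>t \<in> polyfun X\<close> show "t * p \<in> I" unfolding I_def
      by (intro CollectI conjI polyfun.mult_closed exI[of _ E1]) auto
  qed
  moreover have "1 \<notin> I"
  proof
    assume "1 \<in> I"
    then obtain E0 where "finite E0" "E0 \<subseteq> E" "\<forall>\<xi>. (\<forall>f\<in>E0. f \<xi> = 0) \<longrightarrow> (1 :: ('v \<Rightarrow> 'k) \<Rightarrow> 'k) \<xi> = 0"
      unfolding I_def by blast
    moreover obtain \<xi> where "\<forall>f\<in>E0. f \<xi> = 0"
      using finite_solvable[OF \<open>finite E0\<close> \<open>E0 \<subseteq> E\<close>] by blast
    ultimately have "(1 :: ('v \<Rightarrow> 'k) \<Rightarrow> 'k) \<xi> = 0" by blast
    then show False by simp
  qed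
  ultimately obtain m where m: "polyfun.maximal_ideal X m" "I \<subseteq> m"
    using polyfun.maximal_ideal_exists by blast
  moreover have "E \<subseteq> I"
  proof
    fix f assume "f \<in> E"
    with E show "f \<in> I" unfolding I_def by (intro CollectI conjI exI[of _ "{f}"]) auto
  qed
  moreover obtain \<xi> where "\<forall>p\<in>m. p \<xi> = 0"
    using polyfun_maximal_ideal_zero[OF unc X m(1)] by blast
  ultimately show ?thesis by blast
qed

section \<open>The prodiscrete topology on configurations\<close>

lemma topspace_prodiscrete: "topspace (product_topology (\<lambda>_. discrete_topology A) UNIV) = configs A"
  by (auto simp: configs_def PiE_def extensional_def)

lemma openin_prodiscrete_cylinder:
  assumes "finite \<Omega>" "y \<in> configs A"
  shows "openin (product_topology (\<lambda>_. discrete_topology A) UNIV) {z \<in> configs A. \<forall>g\<in>\<Omega>. z g = y g}"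
proof -
  have "{z \<in> configs A. \<forall>g\<in>\<Omega>. z g = y g} = (\<Pi>\<^sub>E g\<in>UNIV. if g \<in> \<Omega> then {y g} else A)"
    using assms(2) by (auto simp: configs_def PiE_iff split: if_splits)
  also have "openin (product_topology (\<lambda>_. discrete_topology A) UNIV) \<dots>"
  proof (rule product_topology_basis)
    show "finite {g. (if g \<in> \<Omega> then {y g} else A) \<noteq> topspace (discrete_topology A)}"
      by (rule finite_subset[OF _ assms(1)]) auto
  qed (use assms(2) in \<open>auto simp: configs_def\<close>)
  finally show ?thesis .
qed

lemma closedin_prodiscrete:
  assumes S: "S \<subseteq> configs A"
    and approx: "\<And>y. y \<in> configs A \<Longrightarrow> (\<And>\<Omega>. finite \<Omega> \<Longrightarrow> \<exists>z\<in>S. \<forall>g\<in>\<Omega>. z g = y g) \<Longrightarrow> y \<in> S"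
  shows "closedin (product_topology (\<lambda>_. discrete_topology A) UNIV) S"
  unfolding closedin_def topspace_prodiscrete
proof (intro conjI S)
  show "openin (product_topology (\<lambda>_. discrete_topology A) UNIV) (configs A - S)"
  proof (subst openin_subopen, intro ballI)
    fix y assume y: "y \<in> configs A - S"
    have "\<not> (\<forall>\<Omega>. finite \<Omega> \<longrightarrow> (\<exists>z\<in>S. \<forall>g\<in>\<Omega>. z g = y g))"
    proof
      assume "\<forall>\<Omega>. finite \<Omega> \<longrightarrow> (\<exists>z\<in>S. \<forall>g\<in>\<Omega>. z g = y g)"
      with y have "y \<in> S" by (intro approx) auto
      with y show False by simp
    qed
    then obtain \<Omega> where \<Omega>: "finite \<Omega>" "\<not> (\<exists>z\<in>S. \<forall>g\<in>\<Omega>. z g = y g)"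
      by blast
    define T where "T = {z \<in> configs A. \<forall>g\<in>\<Omega>. z g = y g}"
    have "openin (product_topology (\<lambda>_. discrete_topology A) UNIV) T"
      unfolding T_def using \<Omega>(1) y by (intro openin_prodiscrete_cylinder) auto
    moreover have "y \<in> T" "T \<subseteq> configs A - S" using y \<Omega>(2) unfolding T_def by auto
    ultimately show "\<exists>T. openin (product_topology (\<lambda>_. discrete_topology A) UNIV) T \<and> y \<in> T \<and> T \<subseteq> configs A - S"
      by blast
  qed
qed

section \<open>Cosets of finitely generated subgroups\<close>

definition generated_subgroup :: "'g::group_add set \<Rightarrow> 'g set" where
  "generated_subgroup M = sum_list ` lists (M \<union> uminus ` M)"

lemma generated_subgroup_generator: "m \<in> M \<Longrightarrow> m \<in> generated_subgroup M"
  unfolding generated_subgroup_def by (intro image_eqI[of _ _ "[m]"]) auto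

lemma generated_subgroup_generator_uminus: "m \<in> M \<Longrightarrow> - m \<in> generated_subgroup M"
  unfolding generated_subgroup_def by (intro image_eqI[of _ _ "[- m]"]) auto

lemma generated_subgroup_add:
  assumes "a \<in> generated_subgroup M" "b \<in> generated_subgroup M"
  shows "a + b \<in> generated_subgroup M"
proof -
  from assms obtain xs ys where "a = sum_list xs" "b = sum_list ys"
    "xs \<in> lists (M \<union> uminus ` M)" "ys \<in> lists (M \<union> uminus ` M)"
    unfolding generated_subgroup_def by blast
  then show ?thesis unfolding generated_subgroup_def by (intro image_eqI[of _ _ "xs @ ys"]) auto
qed

lemma countable_generated_subgroup: "finite M \<Longrightarrow> countable (generated_subgroup M)"
  unfolding generated_subgroup_def by (intro countable_image countable_lists countable_finite) auto

definition coset :: "'g::group_add set \<Rightarrow> 'g \<Rightarrow> 'g set" where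
  "coset M g = (+) g ` generated_subgroup M"

lemma coset_self: "g \<in> coset M g"
  unfolding coset_def generated_subgroup_def by (intro image_eqI[of _ _ 0] image_eqI[of _ _ "[]"]) auto

lemma coset_add_generator:
  assumes "g \<in> coset M g0" "m \<in> M"
  shows "g + m \<in> coset M g0"
proof -
  from assms(1) obtain h where h: "h \<in> generated_subgroup M" "g = g0 + h" unfolding coset_def by blast
  then have "g + m = g0 + (h + m)" by (simp add: add.assoc)
  moreover have "h + m \<in> generated_subgroup M"
    by (rule generated_subgroup_add[OF h(1) generated_subgroup_generator[OF assms(2)]])
  ultimately show ?thesis unfolding coset_def by blast
qed

lemma coset_translate_generator:
  assumes "m \<in> M"
  shows "coset M (g + m) = coset M g"
proof
  show "coset M (g + m) \<subseteq> coset M g"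
  proof
    fix a assume "a \<in> coset M (g + m)"
    then obtain h where h: "h \<in> generated_subgroup M" "a = g + m + h" unfolding coset_def by blast
    then have "a = g + (m + h)" by (simp add: add.assoc)
    with h(1) show "a \<in> coset M g"
      unfolding coset_def using generated_subgroup_add[OF generated_subgroup_generator[OF assms]]
      by blast
  qed
  show "coset M g \<subseteq> coset M (g + m)"
  proof
    fix a assume "a \<in> coset M g"
    then obtain h where h: "h \<in> generated_subgroup M" "a = g + h" unfolding coset_def by blast
    then have "a = (g + m) + (- m + h)" by (simp add: add.assoc)
    with h(1) show "a \<in> coset M (g + m)"
      unfolding coset_def using generated_subgroup_add[OF generated_subgroup_generator_uminus[OF assms]]
      by blast
  qed
qed

lemma countable_coset: "finite M \<Longrightarrow> countable (coset M g)"
  unfolding coset_def using countable_generated_subgroup by blast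

section \<open>Algebraic cellular automata\<close>

definition polynomial_rule ::
    "('n \<Rightarrow> (('g \<times> 'n) \<Rightarrow> 'k) \<Rightarrow> 'k) \<Rightarrow> ('g::plus \<Rightarrow> 'n \<Rightarrow> 'k) \<Rightarrow> 'g \<Rightarrow> 'n \<Rightarrow> 'k" where
  "polynomial_rule P x g = (\<lambda>j. P j (\<lambda>(h, i). x (g + h) i))"

lemma polynomial_rule_cong:
  assumes "\<And>j. P j \<in> polyfun (M \<times> UNIV)" "\<And>h. h \<in> M \<Longrightarrow> x (g + h) = x' (g' + h)"
  shows "polynomial_rule P x g = polynomial_rule P x' g'"
  unfolding polynomial_rule_def using assms by (intro ext polyfun_cong[OF assms(1)]) auto

lemma algebraic_ca_polynomial_rule:
  fixes A :: "('n \<Rightarrow> 'k::field) set" and \<tau> :: "('g::group_add \<Rightarrow> 'n \<Rightarrow> 'k) \<Rightarrow> ('g \<Rightarrow> 'n \<Rightarrow> 'k)"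
  assumes "algebraic_ca A \<tau>"
  obtains M P where "finite M" "\<And>j. P j \<in> polyfun (M \<times> UNIV)"
    "\<And>x. x \<in> configs A \<Longrightarrow> \<tau> x \<in> configs A"
    "\<And>x. x \<in> configs A \<Longrightarrow> \<tau> x = polynomial_rule P x"
proof -
  obtain M \<mu> where mem: "memory_local_map A \<tau> M \<mu>" and reg: "regular_local_map A M \<mu>"
    using assms unfolding algebraic_ca_def by blast
  then have M: "finite M" and \<mu>A: "\<And>y. y \<in> PiE M (\<lambda>_. A) \<Longrightarrow> \<mu> y \<in> A"
    and \<tau>: "\<And>x g. x \<in> configs A \<Longrightarrow> \<tau> x g = \<mu> (restrict (shift (- g) x) M)"
    unfolding memory_local_map_def by auto
  obtain P where P: "\<And>j. P j \<in> polyfun (M \<times> UNIV)"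
    and \<mu>P: "\<And>y. y \<in> PiE M (\<lambda>_. A) \<Longrightarrow> \<mu> y = (\<lambda>j. P j (\<lambda>(h, i). y h i))"
    using reg unfolding regular_local_map_def by blast
  have window: "restrict (shift (- g) x) M \<in> PiE M (\<lambda>_. A)" if "x \<in> configs A" for x g
    using that by (auto simp: configs_def shift_def)
  show ?thesis
  proof
    fix x :: "'g \<Rightarrow> 'n \<Rightarrow> 'k" assume x: "x \<in> configs A"
    show "\<tau> x \<in> configs A" using \<mu>A[OF window[OF x]] \<tau>[OF x] by (simp add: configs_def)
    show "\<tau> x = polynomial_rule P x"
    proof
      fix g
      have "\<tau> x g = polynomial_rule P (restrict (shift (- g) x) M) 0"
        using \<tau>[OF x] \<mu>P[OF window[OF x]] by (simp add: polynomial_rule_def)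
      also have "\<dots> = polynomial_rule P x g"
        by (rule polynomial_rule_cong[OF P]) (simp add: shift_def)
      finally show "\<tau> x g = polynomial_rule P x g" .
    qed
  qed (fact M P)+
qed

lemma polyfun_state_equation:
  assumes "f \<in> polyfun UNIV" "g \<in> \<Omega>"
  shows "(\<lambda>\<xi>. f (curry \<xi> g)) \<in> polyfun (\<Omega> \<times> UNIV)"
proof -
  have "(\<lambda>\<xi>. f (\<lambda>i. \<xi> (g, i))) \<in> polyfun (\<Omega> \<times> UNIV)"
    by (rule polyfun_subst[of f UNIV "\<lambda>i \<xi>. \<xi> (g, i)"]) (use assms in \<open>auto intro: polyfun.var\<close>)
  then show ?thesis by (simp add: curry_def)
qed

lemma polyfun_rule_equation:
  assumes P: "P j \<in> polyfun (M \<times> UNIV)" and \<Omega>: "\<And>h. h \<in> M \<Longrightarrow> g + h \<in> \<Omega>"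
  shows "(\<lambda>\<xi>. polynomial_rule P (curry \<xi>) g j - c) \<in> polyfun (\<Omega> \<times> UNIV)"
proof -
  have "(\<lambda>\<xi>. P j (\<lambda>p. \<xi> (g + fst p, snd p))) \<in> polyfun (\<Omega> \<times> UNIV)"
    by (rule polyfun_subst[OF P, of "\<lambda>p \<xi>. \<xi> (g + fst p, snd p)"])
      (use \<Omega> in \<open>auto intro: polyfun.var\<close>)
  then have "(\<lambda>\<xi>. P j (\<lambda>p. \<xi> (g + fst p, snd p)) + - c) \<in> polyfun (\<Omega> \<times> UNIV)"
    by (intro polyfun.add polyfun.const)
  then show ?thesis by (simp add: polynomial_rule_def case_prod_unfold)
qed

text \<open>The unknowns are the coordinates \<open>x g i\<close>, \<open>(g, i) \<in> \<Omega> \<times> 'n\<close>, countably many.\<close>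

lemma polynomial_rule_compactness:
  fixes P :: "'n::finite \<Rightarrow> (('g::group_add \<times> 'n) \<Rightarrow> 'k::alg_closed_field) \<Rightarrow> 'k"
    and y :: "'g \<Rightarrow> 'n \<Rightarrow> 'k"
  assumes unc: "uncountable (UNIV :: 'k set)"
    and S: "S \<subseteq> polyfun UNIV" "A = {a. \<forall>f\<in>S. f a = 0}"
    and P: "\<And>j. P j \<in> polyfun (M \<times> UNIV)"
    and \<Omega>: "countable \<Omega>" "\<And>g h. g \<in> \<Omega> \<Longrightarrow> h \<in> M \<Longrightarrow> g + h \<in> \<Omega>"
    and finite_approx: "\<And>\<Omega>0. finite \<Omega>0 \<Longrightarrow> \<exists>x\<in>configs A. \<forall>g\<in>\<Omega>0. polynomial_rule P x g = y g"
  shows "\<exists>x. (\<forall>g\<in>\<Omega>. x g \<in> A) \<and> (\<forall>g\<in>\<Omega>. polynomial_rule P x g = y g)"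
proof -
  define state_eq where "state_eq g f = (\<lambda>\<xi>. f (curry \<xi> g))"
    for g :: 'g and f :: "('n \<Rightarrow> 'k) \<Rightarrow> 'k"
  define rule_eq where "rule_eq g j = (\<lambda>\<xi>. polynomial_rule P (curry \<xi>) g j - y g j)" for g j
  define E where "E = case_prod state_eq ` (\<Omega> \<times> S) \<union> case_prod rule_eq ` (\<Omega> \<times> UNIV)"
  have "state_eq g f \<in> polyfun (\<Omega> \<times> UNIV)" if "g \<in> \<Omega>" "f \<in> S" for g f
    unfolding state_eq_def using S(1) that by (intro polyfun_state_equation) auto
  moreover have "rule_eq g j \<in> polyfun (\<Omega> \<times> UNIV)" if "g \<in> \<Omega>" for g j
    unfolding rule_eq_def using \<Omega>(2) that by (intro polyfun_rule_equation[OF P])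
  ultimately have E_poly: "E \<subseteq> polyfun (\<Omega> \<times> UNIV)" unfolding E_def by auto
  have countable_vars: "countable (\<Omega> \<times> (UNIV :: 'n set))" using \<Omega>(1) by simp
  text \<open>A finite subsystem only involves finitely many rule equations; solve them by
    approximation.\<close>
  have finitely_solvable: "\<exists>\<xi>. \<forall>e\<in>E0. e \<xi> = 0" if E0: "finite E0" "E0 \<subseteq> E" for E0
  proof -
    let ?R = "case_prod rule_eq ` (\<Omega> \<times> UNIV)"
    obtain D where D: "finite D" "E0 \<inter> ?R = case_prod rule_eq ` D"
      using finite_subset_image[of "E0 \<inter> ?R" "case_prod rule_eq" "\<Omega> \<times> UNIV"] E0(1) by blast
    obtain x where x: "x \<in> configs A" "\<And>g. g \<in> fst ` D \<Longrightarrow> polynomial_rule P x g = y g"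
      using finite_approx[of "fst ` D"] D(1) by blast
    have "e (case_prod x) = 0" if "e \<in> E0" for e
    proof (cases "e \<in> ?R")
      case True
      with that D(2) have "e \<in> case_prod rule_eq ` D" by blast
      then obtain g j where gj: "(g, j) \<in> D" "e = rule_eq g j" by auto
      then have "g \<in> fst ` D" by (metis fst_conv image_eqI)
      then have "polynomial_rule P x g = y g" by (rule x(2))
      then show ?thesis unfolding gj(2) rule_eq_def by simp
    next
      case False
      with that E0(2) have "e \<in> case_prod state_eq ` (\<Omega> \<times> S)" unfolding E_def by blast
      then obtain g f where "f \<in> S" "e = state_eq g f" by auto
      with x(1) S(2) show ?thesis by (auto simp: state_eq_def configs_def)
    qed
    then show ?thesis by blast
  qed
  obtain \<xi> where \<xi>: "\<And>e. e \<in> E \<Longrightarrow> e \<xi> = 0"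
    using polynomial_system_compactness[OF unc countable_vars E_poly finitely_solvable] by blast
  show ?thesis
  proof (intro exI[of _ "curry \<xi>"] conjI ballI)
    fix g assume "g \<in> \<Omega>"
    then have "state_eq g f \<xi> = 0" if "f \<in> S" for f
      using that \<xi> unfolding E_def by blast
    with S(2) show "curry \<xi> g \<in> A" by (simp add: state_eq_def)
    have "rule_eq g j \<xi> = 0" for j
      using \<open>g \<in> \<Omega>\<close> \<xi> unfolding E_def by blast
    then show "polynomial_rule P (curry \<xi>) g = y g" by (simp add: rule_eq_def fun_eq_iff)
  qed
qed

text \<open>Solutions on the cosets of the subgroup generated by the memory set glue to a global
  solution, since the rule at a cell only reads cells of the same coset.\<close>

lemma glue_coset_solutions:
  fixes P :: "'n \<Rightarrow> (('g::group_add \<times> 'n) \<Rightarrow> 'k::comm_ring_1) \<Rightarrow> 'k"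
  assumes P: "\<And>j. P j \<in> polyfun (M \<times> UNIV)"
    and local_solution:
      "\<And>g0. \<exists>x. (\<forall>g\<in>coset M g0. x g \<in> A) \<and> (\<forall>g\<in>coset M g0. polynomial_rule P x g = y g)"
  shows "\<exists>x\<in>configs A. polynomial_rule P x = y"
proof -
  have "\<forall>C\<in>range (coset M). \<exists>x. (\<forall>g\<in>C. x g \<in> A) \<and> (\<forall>g\<in>C. polynomial_rule P x g = y g)"
    using local_solution by blast
  then obtain xs where xs: "\<And>g0 g. g \<in> coset M g0 \<Longrightarrow> xs (coset M g0) g \<in> A"
    "\<And>g0 g. g \<in> coset M g0 \<Longrightarrow> polynomial_rule P (xs (coset M g0)) g = y g"
    by (metis (mono_tags, lifting) rangeI)
  define x where "x g = xs (coset M g) g" for g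
  have "x \<in> configs A" using xs(1)[OF coset_self] by (simp add: x_def configs_def)
  moreover have "polynomial_rule P x g = y g" for g
  proof -
    have "polynomial_rule P x g = polynomial_rule P (xs (coset M g)) g"
      by (rule polynomial_rule_cong[OF P]) (simp add: x_def coset_translate_generator)
    also have "\<dots> = y g" by (rule xs(2)[OF coset_self])
    finally show ?thesis .
  qed
  ultimately show ?thesis by blast
qed

section \<open>The closed image property\<close>

theorem theorem1p1:
  fixes A :: "('n::finite \<Rightarrow> 'k::alg_closed_field) set"
    and \<tau> :: "('g::group_add \<Rightarrow> 'n \<Rightarrow> 'k) \<Rightarrow> ('g \<Rightarrow> 'n \<Rightarrow> 'k)"
  assumes "uncountable (UNIV :: 'k set)"
    and "affine_algebraic_set A"
    and "algebraic_ca A \<tau>"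
  shows "closedin (product_topology (\<lambda>_. discrete_topology A) UNIV) (\<tau> ` configs A)"
proof -
  obtain S where S: "S \<subseteq> polyfun UNIV" "A = {a. \<forall>f\<in>S. f a = 0}"
    using assms(2) unfolding affine_algebraic_set_def by blast
  obtain M :: "'g set" and P :: "'n \<Rightarrow> ('g \<times> 'n \<Rightarrow> 'k) \<Rightarrow> 'k"
    where M: "finite M" and P: "\<And>j. P j \<in> polyfun (M \<times> UNIV)"
    and \<tau>_configs: "\<And>x. x \<in> configs A \<Longrightarrow> \<tau> x \<in> configs A"
    and \<tau>_rule: "\<And>x. x \<in> configs A \<Longrightarrow> \<tau> x = polynomial_rule P x"
    by (rule algebraic_ca_polynomial_rule[OF assms(3)]) (rule that)
  show ?thesis
  proof (rule closedin_prodiscrete)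
    show "\<tau> ` configs A \<subseteq> configs A" using \<tau>_configs by blast
  next
    fix y assume approx: "\<And>\<Omega>. finite \<Omega> \<Longrightarrow> \<exists>z\<in>\<tau> ` configs A. \<forall>g\<in>\<Omega>. z g = y g"
    text \<open>Solve \<open>\<tau> x = y\<close> separately on each (countable) coset of \<open>\<langle>M\<rangle>\<close>, then glue.\<close>
    have "\<exists>x. (\<forall>g\<in>coset M g0. x g \<in> A) \<and> (\<forall>g\<in>coset M g0. polynomial_rule P x g = y g)" for g0
    proof (rule polynomial_rule_compactness[OF assms(1) S P countable_coset[OF M]])
      show "g + h \<in> coset M g0" if "g \<in> coset M g0" "h \<in> M" for g h
        using that by (rule coset_add_generator)
      show "\<exists>x\<in>configs A. \<forall>g\<in>\<Omega>0. polynomial_rule P x g = y g" if "finite \<Omega>0" for \<Omega>0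
      proof -
        from approx[OF that] obtain x where "x \<in> configs A" "\<forall>g\<in>\<Omega>0. \<tau> x g = y g" by blast
        with \<tau>_rule show ?thesis by auto
      qed
    qed
    from glue_coset_solutions[OF P this]
    obtain x where x: "x \<in> configs A" "polynomial_rule P x = y" by blast
    then have "y = \<tau> x" using \<tau>_rule by simp
    with x(1) show "y \<in> \<tau> ` configs A" by blast
  qed
qed

end
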